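(* Let $S$ be a finite semigroup. Every element of $S$ has a square root in $S$ if and only if every element of $S$ belongs to a maximal subgroup of $S$ of odd order.
   Context: A square root of $x\in S$ is an element $y\in S$ with $y^2=x$. A maximal subgroup of $S$ is a subgroup maximal under inclusion, equivalently the $\mathcal H$-class of an idempotent. *)

theory Defs
  imports Main
begin

definition is_subgroup :: "'a::semigroup_mult set \<Rightarrow> bool" where
  "is_subgroup G \<longleftrightarrow>
     (\<forall>x\<in>G. \<forall>y\<in>G. x * y \<in> G) \<and>
     (\<exists>e\<in>G. \<forall>x\<in>G. e * x = x \<and> x * e = x \<and> (\<exists>y\<in>G. x * y = e \<and> y * x = e))"

definition maximal_subgroup :: "'a::semigroup_mult set \<Rightarrow> bool" where
  "maximal_subgroup G \<longleftrightarrow> is_subgroup G \<and> (\<forall>H. is_subgroup H \<and> G \<subseteq> H \<longrightarrow> H = G)"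

end

theory Submission
  imports Defs "HOL-Algebra.Sylow" "HOL-Algebra.Multiplicative_Group"
begin

text \<open>If every element lies in a subgroup of odd order \<open>m\<close>, then \<open>x = x\<^bsup>m+1\<^esup>\<close> is the square
of \<open>x\<^bsup>(m+1)/2\<^esup>\<close>. Conversely, if squaring is surjective on the finite semigroup, it is a
permutation, so every \<open>x\<close> returns to itself under iterated squaring: \<open>x = x\<^bsup>n+2\<^esup>\<close> for some \<open>n\<close>.
Then \<open>e = x\<^bsup>n+1\<^esup>\<close> is idempotent and \<open>x\<close> is a unit of the local monoid \<open>eSe\<close>, whose group of
units is the maximal subgroup at \<open>e\<close>. That group has odd order: otherwise, by Cauchy's
theorem, it contains an involution \<open>t \<noteq> e\<close> with \<open>t\<^sup>2 = e\<^sup>2\<close>, contradicting injectivity of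
squaring.\<close>

lemma (in group) odd_order_square_root:
  assumes "finite (carrier G)" and "odd (order G)" and x: "x \<in> carrier G"
  shows "\<exists>y\<in>carrier G. y \<otimes> y = x"
proof -
  obtain k where "order G = 2 * k + 1"
    using \<open>odd (order G)\<close> by (rule oddE)
  then have k: "Suc (order G) = (k + 1) + (k + 1)"
    by simp
  have "x [^] (k + 1) \<otimes> x [^] (k + 1) = x [^] Suc (order G)"
    using nat_pow_mult[OF x, of "k + 1" "k + 1"] by (simp only: k)
  also have "\<dots> = x"
    using x by (simp add: pow_order_eq_1)
  finally show ?thesis
    using x by blast
qed

lemma (in group) even_order_involution:
  assumes "finite (carrier G)" and "even (order G)"
  shows "\<exists>t\<in>carrier G. t \<noteq> \<one> \<and> t \<otimes> t = \<one>"
proof -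
  have "order G = 2 ^ 1 * (order G div 2)"
    using \<open>even (order G)\<close> by simp
  from sylow_thm[OF two_is_prime_nat is_group this \<open>finite (carrier G)\<close>]
  obtain H where H: "subgroup H G" and "card H = 2"
    by auto
  then have "card (H - {\<one>}) = 1"
    using subgroup.one_closed[OF H] by (simp add: card_Diff_singleton)
  then obtain t where "H - {\<one>} = {t}"
    by (rule card_1_singletonE)
  then have H_eq: "H = {\<one>, t}" and "t \<noteq> \<one>"
    using subgroup.one_closed[OF H] by auto
  then have t: "t \<in> carrier G"
    using subgroup.subset[OF H] by blast
  have "t \<otimes> t \<in> H"
    using subgroup.m_closed[OF H] H_eq by blast
  moreover have "t \<otimes> t \<noteq> t"
    using l_cancel_one[OF t t] \<open>t \<noteq> \<one>\<close> by simp
  ultimately show ?thesis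
    using t \<open>t \<noteq> \<one>\<close> H_eq by blast
qed

definition monoid_of :: "'a::semigroup_mult set \<Rightarrow> 'a \<Rightarrow> 'a monoid" where
  "monoid_of G e = \<lparr>carrier = G, monoid.mult = (*), one = e\<rparr>"

lemma carrier_monoid_of [simp]: "carrier (monoid_of G e) = G"
  and mult_monoid_of [simp]: "x \<otimes>\<^bsub>monoid_of G e\<^esub> y = x * y"
  and one_monoid_of [simp]: "\<one>\<^bsub>monoid_of G e\<^esub> = e"
  by (simp_all add: monoid_of_def)

lemma is_subgroup_group_monoid_of:
  assumes "is_subgroup G"
  obtains e where "group (monoid_of G e)"
proof -
  obtain e where "e \<in> G" "\<forall>x\<in>G. e * x = x \<and> x * e = x \<and> (\<exists>y\<in>G. x * y = e \<and> y * x = e)"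
    using assms unfolding is_subgroup_def by blast
  then have "group (monoid_of G e)"
    using assms by (intro groupI) (auto simp: is_subgroup_def mult.assoc)
  then show thesis ..
qed

lemma is_subgroup_odd_card_square_root:
  assumes "is_subgroup G" and "finite G" and "odd (card G)" and "x \<in> G"
  shows "\<exists>y. y * y = x"
proof -
  obtain e where "group (monoid_of G e)"
    using assms(1) by (rule is_subgroup_group_monoid_of)
  then show ?thesis
    using group.odd_order_square_root[of "monoid_of G e" x] assms by (auto simp: order_def)
qed

lemma is_subgroup_odd_card_if_inj_square:
  assumes "is_subgroup G" and "finite G" and inj: "inj_on (\<lambda>y. y * y) G"
  shows "odd (card G)"
proof
  assume "even (card G)"
  obtain e where "group (monoid_of G e)"
    using assms(1) by (rule is_subgroup_group_monoid_of)
  then interpret group "monoid_of G e" .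
  obtain t where "t \<in> G" "t \<noteq> e" "t * t = e"
    using even_order_involution \<open>finite G\<close> \<open>even (card G)\<close> by (auto simp: order_def)
  moreover have "e \<in> G" "e * e = e"
    using one_closed l_one[OF one_closed] by simp_all
  ultimately show False
    using inj by (auto simp: inj_on_def)
qed

text \<open>\<open>ppow x n = x\<^bsup>n+1\<^esup>\<close>: without an identity the exponent is shifted by one.\<close>

fun ppow :: "'a::semigroup_mult \<Rightarrow> nat \<Rightarrow> 'a" where
  "ppow x 0 = x"
| "ppow x (Suc n) = x * ppow x n"

lemma ppow_add: "ppow x m * ppow x n = ppow x (Suc (m + n))"
  by (induction m) (auto simp: mult.assoc)

lemma ppow_commute: "ppow x m * ppow x n = ppow x n * ppow x m"
  by (simp add: ppow_add add.commute)

lemma funpow_square_eq_ppow: "((\<lambda>y. y * y) ^^ k) x = ppow x (2 ^ k - 1)"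
proof (induction k)
  case (Suc k)
  have "Suc (2 ^ k - 1 + (2 ^ k - 1)) = 2 ^ Suc k - (1::nat)"
    using one_le_power[of "2::nat" k] by (simp only: power_Suc) linarith
  then show ?case
    using Suc by (simp add: ppow_add del: ppow.simps)
qed simp

lemma ppow_periodic:
  assumes "ppow x (Suc n) = x"
  shows "ppow x (k + Suc n) = ppow x k"
  using assms by (induction k) simp_all

text \<open>The group of units of the local monoid \<open>eSe\<close>; for idempotent \<open>e\<close> this is the
\<open>\<H>\<close>-class of \<open>e\<close>.\<close>

definition Hgroup :: "'a::semigroup_mult \<Rightarrow> 'a set" where
  "Hgroup e = {y. e * y = y \<and> y * e = y \<and> (\<exists>z. e * z = z \<and> z * e = z \<and> y * z = e \<and> z * y = e)}"

lemma Hgroup_inverse: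
  assumes "y \<in> Hgroup e"
  shows "\<exists>z\<in>Hgroup e. y * z = e \<and> z * y = e"
  using assms unfolding Hgroup_def by blast

lemma Hgroup_mult_closed:
  assumes a: "a \<in> Hgroup e" and b: "b \<in> Hgroup e"
  shows "a * b \<in> Hgroup e"
proof -
  obtain za zb where za: "e * za = za" "za * e = za" "a * za = e" "za * a = e"
    and zb: "e * zb = zb" "zb * e = zb" "b * zb = e" "zb * b = e"
    using a b unfolding Hgroup_def by blast
  have "e * a = a" "a * e = a" "b * e = b"
    using a b unfolding Hgroup_def by blast+
  have "e * (a * b) = a * b" "a * b * e = a * b"
    using \<open>e * a = a\<close> \<open>b * e = b\<close> by (simp flip: mult.assoc, simp add: mult.assoc)
  moreover have "e * (zb * za) = zb * za" "zb * za * e = zb * za"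
    using zb(1) za(2) by (simp flip: mult.assoc, simp add: mult.assoc)
  moreover have "a * b * (zb * za) = e"
  proof -
    have "a * b * (zb * za) = a * (b * zb) * za"
      by (simp add: mult.assoc)
    also have "\<dots> = e"
      using zb(3) \<open>a * e = a\<close> za(3) by simp
    finally show ?thesis .
  qed
  moreover have "zb * za * (a * b) = e"
  proof -
    have "zb * za * (a * b) = zb * (za * a) * b"
      by (simp add: mult.assoc)
    also have "\<dots> = e"
      using za(4) zb(2) zb(4) by simp
    finally show ?thesis .
  qed
  ultimately show ?thesis
    unfolding Hgroup_def by blast
qed

lemma Hgroup_is_subgroup:
  assumes "e * e = e"
  shows "is_subgroup (Hgroup e)"
proof -
  have "e \<in> Hgroup e"
    using assms unfolding Hgroup_def by blast
  moreover have "\<forall>y\<in>Hgroup e. e * y = y \<and> y * e = y \<and> (\<exists>z\<in>Hgroup e. y * z = e \<and> z * y = e)"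
    using Hgroup_inverse unfolding Hgroup_def by blast
  moreover have "\<forall>a\<in>Hgroup e. \<forall>b\<in>Hgroup e. a * b \<in> Hgroup e"
    using Hgroup_mult_closed by blast
  ultimately show ?thesis
    unfolding is_subgroup_def by blast
qed

text \<open>The identity \<open>f\<close> of \<open>K\<close> equals \<open>e\<close>, the only idempotent of a group.\<close>

lemma is_subgroup_subset_Hgroup:
  assumes K: "is_subgroup K" and "e \<in> K" and ee: "e * e = e"
  shows "K \<subseteq> Hgroup e"
proof -
  obtain f where f: "\<forall>y\<in>K. f * y = y \<and> y * f = y \<and> (\<exists>z\<in>K. y * z = f \<and> z * y = f)"
    using K unfolding is_subgroup_def by blast
  then obtain w where "w * e = f"
    using \<open>e \<in> K\<close> by blast
  then have "f = f * e"
    using ee by (metis mult.assoc)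
  also have "\<dots> = e"
    using f \<open>e \<in> K\<close> by blast
  finally show ?thesis
    using f unfolding Hgroup_def by blast
qed

lemma Hgroup_maximal_subgroup:
  assumes "e * e = e"
  shows "maximal_subgroup (Hgroup e)"
proof -
  have "e \<in> Hgroup e"
    using assms unfolding Hgroup_def by blast
  then show ?thesis
    unfolding maximal_subgroup_def
    using assms Hgroup_is_subgroup is_subgroup_subset_Hgroup by blast
qed

lemma ppow_periodic_idempotent:
  assumes "ppow x (Suc n) = x"
  shows "ppow x n * ppow x n = ppow x n"
  using ppow_periodic[OF assms, of n] by (simp add: ppow_add add.assoc del: ppow.simps)

text \<open>With \<open>e = x\<^bsup>n+1\<^esup>\<close>, the inverse of \<open>x\<close> in \<open>Hgroup e\<close> is \<open>x\<^bsup>2n+1\<^esup>\<close>.\<close>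

lemma ppow_periodic_in_Hgroup:
  assumes per: "ppow x (Suc n) = x"
  shows "x \<in> Hgroup (ppow x n)"
proof -
  let ?e = "ppow x n" and ?z = "ppow x (n + n)"
  have ex: "?e * x = x"
    using ppow_add[of x n 0] per by simp
  have xz: "x * ?z = ?e"
    using ppow_periodic[OF per, of n] by (simp add: add.commute)
  have ez: "?e * ?z = ?z"
    using ppow_add[of x n "n + n"] ppow_periodic[OF per, of "n + n"] by (simp add: add.commute)
  have "x * ?e = ?e * x" "?z * x = x * ?z" "?z * ?e = ?e * ?z"
    using ppow_commute[of x 0 n] ppow_commute[of x "n + n" 0] ppow_commute[of x "n + n" n]
    by simp_all
  with ex xz ez show ?thesis
    unfolding Hgroup_def by auto
qed

lemma inj_funpow_periodic:
  fixes f :: "'a::finite \<Rightarrow> 'a"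
  assumes "inj f"
  obtains k where "k > 0" "(f ^^ k) x = x"
proof -
  have "\<not> inj (\<lambda>i::nat. (f ^^ i) x)"
    using finite_imageD[of "\<lambda>i::nat. (f ^^ i) x" UNIV] by auto
  then obtain i j where "(f ^^ i) x = (f ^^ j) x" "i \<noteq> j"
    unfolding inj_def by blast
  then obtain i j where "(f ^^ i) x = (f ^^ j) x" "i < j"
    by (metis nat_neq_iff)
  then have "(f ^^ i) ((f ^^ (j - i)) x) = (f ^^ i) x"
    by (simp flip: funpow_add[THEN fun_cong, unfolded o_def])
  then have "(f ^^ (j - i)) x = x"
    using inj_fn[OF assms, of i] by (simp add: inj_eq)
  then show thesis
    using that[of "j - i"] \<open>i < j\<close> by simp
qed

lemma inj_square_periodic:
  fixes x :: "'a::{finite, semigroup_mult}"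
  assumes "inj (\<lambda>y::'a. y * y)"
  obtains n where "ppow x (Suc n) = x"
proof -
  from assms obtain k where "k > 0" "((\<lambda>y. y * y) ^^ k) x = x"
    by (rule inj_funpow_periodic)
  moreover have "2 ^ k - 1 = Suc (2 ^ k - 2)"
    using \<open>k > 0\<close> one_less_power[of "2::nat" k] by simp
  ultimately have "ppow x (Suc (2 ^ k - 2)) = x"
    using funpow_square_eq_ppow[of k x] by simp
  then show thesis
    by (rule that)
qed

theorem corollary4p10:
  fixes dummy :: "'a::{finite, semigroup_mult}"
  shows "(\<forall>x::'a. \<exists>y. y * y = x) \<longleftrightarrow>
         (\<forall>x::'a. \<exists>G. maximal_subgroup G \<and> x \<in> G \<and> odd (card G))"
proof (intro iffI allI)
  fix x :: 'a
  assume "\<forall>x::'a. \<exists>y. y * y = x"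
  then have inj: "inj (\<lambda>y::'a. y * y)"
    by (metis finite_UNIV_surj_inj finite surjI)
  obtain n where per: "ppow x (Suc n) = x"
    using inj by (rule inj_square_periodic)
  let ?G = "Hgroup (ppow x n)"
  have "maximal_subgroup ?G"
    using ppow_periodic_idempotent[OF per] by (rule Hgroup_maximal_subgroup)
  moreover have "odd (card ?G)"
    using \<open>maximal_subgroup ?G\<close> inj_on_subset[OF inj subset_UNIV]
    by (intro is_subgroup_odd_card_if_inj_square) (simp_all add: maximal_subgroup_def)
  ultimately show "\<exists>G. maximal_subgroup G \<and> x \<in> G \<and> odd (card G)"
    using ppow_periodic_in_Hgroup[OF per] by blast
next
  fix x :: 'a
  assume "\<forall>x::'a. \<exists>G. maximal_subgroup G \<and> x \<in> G \<and> odd (card G)"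
  then obtain G where "maximal_subgroup G" "x \<in> G" "odd (card G)"
    by blast
  then show "\<exists>y. y * y = x"
    by (intro is_subgroup_odd_card_square_root) (simp_all add: maximal_subgroup_def)
qed

end
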